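(* Let $(M,\Sigma)$ be a measurable space, $r\ge1$, $\psi_1,\dots,\psi_r\colon\Sigma\to\mathbb{R}$ non-atomic countably additive charges, and $X\in\Sigma$ a set such that for each $i$ either $\psi_i(A)\ge0$ for all measurable $A\subseteq X$, or $\psi_i(A)\le0$ for all measurable $A\subseteq X$. Let $I^+$ be the set of indices $i$ for which $\psi_i(A)\ge0$ for all measurable $A\subseteq X$ (and $I^-$ the remaining indices, for which $\psi_i\le 0$ on subsets of $X$). If $I^+\neq\emptyset$, then $X$ has a strong solution, i.e. there is a partition $X=F_1\sqcup\dots\sqcup F_r$ into measurable sets with $\psi_i(F_i)\ge\psi_i(F_j)$ for all $i,j$.
   Context: A charge is a countably additive real-valued signed measure; it is non-atomic if the positive and negative parts $\mu^+,\mu^-$ of its Hahn–Jordan decomposition $\psi=\mu^+-\mu^-$ are non-atomic measures. Partition elements may be empty. *)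

theory Defs
  imports "HOL-Analysis.Analysis"
begin

definition is_charge :: "'a measure \<Rightarrow> ('a set \<Rightarrow> real) \<Rightarrow> bool" where
  "is_charge M \<psi> \<longleftrightarrow> \<psi> {} = 0 \<and>
     (\<forall>A :: nat \<Rightarrow> 'a set. range A \<subseteq> sets M \<longrightarrow> disjoint_family A \<longrightarrow>
        (\<lambda>n. \<psi> (A n)) sums \<psi> (\<Union>n. A n))"

definition pos_part :: "'a measure \<Rightarrow> ('a set \<Rightarrow> real) \<Rightarrow> 'a set \<Rightarrow> real" where
  "pos_part M \<psi> A = Sup {\<psi> B | B. B \<in> sets M \<and> B \<subseteq> A}"

definition neg_part :: "'a measure \<Rightarrow> ('a set \<Rightarrow> real) \<Rightarrow> 'a set \<Rightarrow> real" where
  "neg_part M \<psi> A = Sup {- \<psi> B | B. B \<in> sets M \<and> B \<subseteq> A}"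

definition is_atom :: "'a measure \<Rightarrow> ('a set \<Rightarrow> real) \<Rightarrow> 'a set \<Rightarrow> bool" where
  "is_atom M \<mu> A \<longleftrightarrow> A \<in> sets M \<and> \<mu> A > 0 \<and>
     (\<forall>B \<in> sets M. B \<subseteq> A \<longrightarrow> \<mu> B = 0 \<or> \<mu> B = \<mu> A)"

definition nonatomic_measure :: "'a measure \<Rightarrow> ('a set \<Rightarrow> real) \<Rightarrow> bool" where
  "nonatomic_measure M \<mu> \<longleftrightarrow> (\<nexists>A. is_atom M \<mu> A)"

definition nonatomic_charge :: "'a measure \<Rightarrow> ('a set \<Rightarrow> real) \<Rightarrow> bool" where
  "nonatomic_charge M \<psi> \<longleftrightarrow> is_charge M \<psi> \<and>
     nonatomic_measure M (pos_part M \<psi>) \<and> nonatomic_measure M (neg_part M \<psi>)"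

end

theory Submission
  imports Defs
begin

(* Indices in I^- receive the empty set, so it suffices to cut X into |I^+| pieces on each of
   which every psi_i with i in I^+ takes the value psi_i(X) / |I^+|.  This follows by induction
   from a finite-dimensional Lyapunov theorem: for t in [0,1] and E \<subseteq> X there is S \<subseteq> E with
   psi_i(S) = t psi_i(E) for all i in I^+.
   By Sierpinski's intermediate value theorem every set splits into finitely many pieces of
   small total mass.  A fractional split of E is a set S together with disjoint pieces q weighted
   by w(q) in [0,1] that represent t E exactly.  Refining the pieces and then passing to a vertex
   of the polytope of admissible weights leaves at most |I^+| fractional weights; weights 1 are
   absorbed into S, weights 0 are dropped.  So S misses t E by at most |I^+| times the mesh,
   and as the mesh tends to 0 the increasing sets S converge to an exact solution. *)

lemma is_charge_empty: "is_charge M f \<Longrightarrow> f {} = 0"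
  by (simp add: is_charge_def)

lemma is_charge_Un:
  assumes f: "is_charge M f" and "A \<in> sets M" "B \<in> sets M" "A \<inter> B = {}"
  shows "f (A \<union> B) = f A + f B"
proof -
  define D where "D n = (if n = 0 then A else if n = 1 then B else {})" for n :: nat
  have "range D \<subseteq> sets M" "disjoint_family D"
    using assms by (auto simp: D_def disjoint_family_on_def)
  then have "(\<lambda>n. f (D n)) sums f (\<Union>n. D n)"
    using f by (simp add: is_charge_def)
  moreover have "(\<Union>n. D n) = A \<union> B"
    by (auto simp: D_def split: if_splits)
  moreover have "(\<lambda>n. f (D n)) sums (\<Sum>n\<in>{0,1}. f (D n))"
    by (rule sums_finite) (auto simp: D_def is_charge_empty[OF f])
  ultimately show ?thesis
    by (simp add: sums_unique2 D_def)
qed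

lemma is_charge_Diff:
  assumes f: "is_charge M f" and "A \<in> sets M" "B \<in> sets M" "B \<subseteq> A"
  shows "f (A - B) = f A - f B"
proof -
  have "f A = f (A - B) + f B"
    using is_charge_Un[OF f, of "A - B" B] assms by (simp add: Un_absorb2 Int_commute)
  then show ?thesis by simp
qed

lemma is_charge_Union:
  assumes f: "is_charge M f" and "finite Q" "Q \<subseteq> sets M" "disjoint Q"
  shows "f (\<Union>Q) = (\<Sum>q\<in>Q. f q)"
  using assms(2-)
proof (induction Q rule: finite_induct)
  case empty
  then show ?case by (simp add: is_charge_empty[OF f])
next
  case (insert q Q)
  have "q \<inter> \<Union>Q = {}" "disjoint Q"
    using insert.prems(2) insert.hyps(2) by (auto simp: disjoint_def)
  moreover have "\<Union>Q \<in> sets M"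
    using insert by (intro sets.finite_Union) auto
  ultimately show ?case
    using insert by (simp add: is_charge_Un[OF f])
qed

lemma is_charge_sum:
  "finite I \<Longrightarrow> (\<And>i. i \<in> I \<Longrightarrow> is_charge M (f i)) \<Longrightarrow> is_charge M (\<lambda>A. \<Sum>i\<in>I. f i A)"
  unfolding is_charge_def by (auto intro!: sums_sum)

lemma is_charge_incseq:
  assumes f: "is_charge M f" and "incseq S" "range S \<subseteq> sets M"
  shows "(\<lambda>n. f (S n)) \<longlonglongrightarrow> f (\<Union>n. S n)"
proof -
  have D: "range (disjointed S) \<subseteq> sets M"
    using assms(3) by (intro sets.range_disjointed_sets)
  have "(\<lambda>n. f (disjointed S n)) sums f (\<Union>n. S n)"
    using f D disjoint_family_disjointed[of S] unfolding is_charge_def by (metis UN_disjointed_eq)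
  then have "(\<lambda>n. \<Sum>i<Suc n. f (disjointed S i)) \<longlonglongrightarrow> f (\<Union>n. S n)"
    unfolding sums_def by (rule LIMSEQ_Suc)
  moreover have "(\<Sum>i<Suc n. f (disjointed S i)) = f (S n)" for n
  proof (induction n)
    case 0
    then show ?case by simp
  next
    case (Suc n)
    have "S (Suc n) = S n \<union> disjointed S (Suc n)" "S n \<inter> disjointed S (Suc n) = {}"
      using \<open>incseq S\<close> by (auto simp: disjointed_mono incseq_Suc_iff mono_def)
    then show ?case
      using Suc D assms(3) by (simp add: is_charge_Un[OF f])
  qed
  ultimately show ?thesis by simp
qed

lemma is_charge_mono_on:
  assumes f: "is_charge M f" and nonneg: "\<And>C. C \<in> sets M \<Longrightarrow> C \<subseteq> X \<Longrightarrow> 0 \<le> f C"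
    and "A \<in> sets M" "B \<in> sets M" "B \<subseteq> A" "A \<subseteq> X"
  shows "f B \<le> f A"
  using is_charge_Diff[OF f, of A B] nonneg[of "A - B"] assms(3-) by auto

lemma partition_on_disjoint_unique:
  assumes "disjoint Q" "q \<in> Q" "q' \<in> Q" "partition_on q R" "partition_on q' R'" "r \<in> R" "r \<in> R'"
  shows "q = q'"
proof (rule ccontr)
  assume "q \<noteq> q'"
  then have "q \<inter> q' = {}"
    using disjointD[OF assms(1-3)] by blast
  moreover have "r \<noteq> {}" "r \<subseteq> q" "r \<subseteq> q'"
    using assms(4-) by (auto simp: partition_on_def)
  ultimately show False
    by blast
qed

lemma disjoint_UN_partition_on:
  assumes "disjoint Q" "\<And>q. q \<in> Q \<Longrightarrow> partition_on q (pieces q)"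
  shows "disjoint (\<Union>q\<in>Q. pieces q)"
proof (rule disjoint_UN)
  show "disjoint (pieces q)" if "q \<in> Q" for q
    using assms(2)[OF that] by (simp add: partition_on_def)
  show "disjoint_family_on (\<lambda>q. \<Union>(pieces q)) Q"
    using assms by (auto simp: disjoint_family_on_def disjoint_def partition_on_def)
qed

lemma is_charge_weighted_refinement:
  assumes f: "is_charge M f" and Q: "finite Q" "disjoint Q"
    and pieces: "\<And>q. q \<in> Q \<Longrightarrow> partition_on q (pieces q) \<and> finite (pieces q) \<and> pieces q \<subseteq> sets M"
    and w': "\<And>q r. q \<in> Q \<Longrightarrow> r \<in> pieces q \<Longrightarrow> w' r = w q"
  shows "(\<Sum>r\<in>(\<Union>q\<in>Q. pieces q). w' r * f r) = (\<Sum>q\<in>Q. w q * f q)"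
proof -
  have "pieces q \<inter> pieces q' = {}" if "q \<in> Q" "q' \<in> Q" "q \<noteq> q'" for q q'
    using that pieces[OF that(1)] pieces[OF that(2)] partition_on_disjoint_unique[OF Q(2) that(1,2)]
    by blast
  then have "(\<Sum>r\<in>(\<Union>q\<in>Q. pieces q). w' r * f r) = (\<Sum>q\<in>Q. \<Sum>r\<in>pieces q. w' r * f r)"
    using Q(1) pieces by (intro sum.UNION_disjoint) auto
  also have "\<dots> = (\<Sum>q\<in>Q. w q * f q)"
  proof (rule sum.cong[OF refl])
    fix q assume q: "q \<in> Q"
    have "(\<Sum>r\<in>pieces q. w' r * f r) = w q * (\<Sum>r\<in>pieces q. f r)"
      using w'[OF q] by (simp add: sum_distrib_left)
    also have "(\<Sum>r\<in>pieces q. f r) = f q"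
      using pieces[OF q] is_charge_Union[OF f, of "pieces q"] by (simp add: partition_on_def)
    finally show "(\<Sum>r\<in>pieces q. w' r * f r) = w q * f q" .
  qed
  finally show ?thesis .
qed

locale nonneg_nonatomic_charge =
  fixes M :: "'a measure" and X :: "'a set" and f :: "'a set \<Rightarrow> real"
  assumes charge: "is_charge M f"
    and nonneg: "\<And>A. A \<in> sets M \<Longrightarrow> A \<subseteq> X \<Longrightarrow> 0 \<le> f A"
    and nonatomic: "\<And>A. A \<in> sets M \<Longrightarrow> A \<subseteq> X \<Longrightarrow> 0 < f A \<Longrightarrow>
      \<exists>B\<in>sets M. B \<subseteq> A \<and> 0 < f B \<and> f B < f A"
begin

lemma mono: "A \<in> sets M \<Longrightarrow> B \<in> sets M \<Longrightarrow> B \<subseteq> A \<Longrightarrow> A \<subseteq> X \<Longrightarrow> f B \<le> f A"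
  by (rule is_charge_mono_on[OF charge nonneg])

lemma exists_subset_le_half:
  assumes A: "A \<in> sets M" "A \<subseteq> X" "0 < f A"
  shows "\<exists>B\<in>sets M. B \<subseteq> A \<and> 0 < f B \<and> f B \<le> f A / 2"
proof -
  obtain B where B: "B \<in> sets M" "B \<subseteq> A" "0 < f B" "f B < f A"
    using nonatomic[OF A] by blast
  have diff: "f (A - B) = f A - f B"
    using is_charge_Diff[OF charge A(1) B(1,2)] .
  show ?thesis
  proof (cases "f B \<le> f A / 2")
    case True
    with B show ?thesis by blast
  next
    case False
    with A B diff show ?thesis by (intro bexI[of _ "A - B"]) auto
  qed
qed

lemma exists_small_subset:
  assumes A: "A \<in> sets M" "A \<subseteq> X" "0 < f A" and "0 < e"
  shows "\<exists>B\<in>sets M. B \<subseteq> A \<and> 0 < f B \<and> f B \<le> e"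
proof -
  have "\<exists>B\<in>sets M. B \<subseteq> A \<and> 0 < f B \<and> f B \<le> f A / 2 ^ m" for m
  proof (induction m)
    case 0
    show ?case using A by auto
  next
    case (Suc m)
    then obtain B where B: "B \<in> sets M" "B \<subseteq> A" "0 < f B" "f B \<le> f A / 2 ^ m"
      by blast
    then obtain C where C: "C \<in> sets M" "C \<subseteq> B" "0 < f C" "f C \<le> f B / 2"
      using exists_subset_le_half[of B] A by blast
    have "f B / 2 \<le> f A / 2 ^ Suc m"
      using B(4) by (simp add: divide_right_mono)
    with B C show ?case
      by (intro bexI[of _ C]) auto
  qed
  moreover obtain m where "f A / e < 2 ^ m"
    using real_arch_pow[of 2 "f A / e"] by auto
  then have "f A / 2 ^ m \<le> e"
    using \<open>0 < e\<close> by (simp add: field_simps)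
  ultimately show ?thesis
    by (meson order_trans)
qed

definition sup_increment :: "'a set \<Rightarrow> real \<Rightarrow> 'a set \<Rightarrow> real" where
  "sup_increment G a S = Sup {f F | F. F \<in> sets M \<and> F \<subseteq> G - S \<and> f S + f F \<le> a}"

lemma le_sup_increment:
  assumes "F \<in> sets M" "F \<subseteq> G - S" "f S + f F \<le> a"
  shows "f F \<le> sup_increment G a S"
  unfolding sup_increment_def
  by (rule cSup_upper) (use assms in \<open>auto intro!: bdd_aboveI[of _ "a - f S"]\<close>)

lemma exists_greedy_increment:
  assumes S: "S \<in> sets M" "S \<subseteq> G" "f S \<le> a"
  shows "\<exists>S'\<in>sets M. S \<subseteq> S' \<and> S' \<subseteq> G \<and> f S' \<le> a \<and> sup_increment G a S \<le> 2 * (f S' - f S)"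
proof (cases "sup_increment G a S \<le> 0")
  case True
  with S show ?thesis by auto
next
  case False
  have "0 \<in> {f F | F. F \<in> sets M \<and> F \<subseteq> G - S \<and> f S + f F \<le> a}"
    using S is_charge_empty[OF charge] by (intro CollectI exI[of _ "{}"]) auto
  moreover have "sup_increment G a S / 2 < sup_increment G a S"
    using False by simp
  ultimately obtain F where F: "F \<in> sets M" "F \<subseteq> G - S" "f S + f F \<le> a"
      "sup_increment G a S / 2 < f F"
    using less_cSupD[of "{f F | F. F \<in> sets M \<and> F \<subseteq> G - S \<and> f S + f F \<le> a}"]
    unfolding sup_increment_def by blast
  have "f (S \<union> F) = f S + f F"
    using S F by (intro is_charge_Un[OF charge]) auto
  with S F show ?thesis
    by (intro bexI[of _ "S \<union> F"]) auto
qed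

lemma exists_greedy_sequence:
  assumes "0 \<le> a"
  shows "\<exists>S. incseq S \<and> (\<forall>n. S n \<in> sets M \<and> S n \<subseteq> G \<and> f (S n) \<le> a \<and>
    sup_increment G a (S n) \<le> 2 * (f (S (Suc n)) - f (S n)))"
proof -
  have "\<exists>S. \<forall>n. (S n \<in> sets M \<and> S n \<subseteq> G \<and> f (S n) \<le> a) \<and>
      (S n \<subseteq> S (Suc n) \<and> sup_increment G a (S n) \<le> 2 * (f (S (Suc n)) - f (S n)))"
  proof (rule dependent_nat_choice)
    show "\<exists>S. S \<in> sets M \<and> S \<subseteq> G \<and> f S \<le> a"
      using assms is_charge_empty[OF charge] by (intro exI[of _ "{}"]) auto
    show "\<exists>S'. (S' \<in> sets M \<and> S' \<subseteq> G \<and> f S' \<le> a) \<and>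
        (S \<subseteq> S' \<and> sup_increment G a S \<le> 2 * (f S' - f S))"
      if S: "S \<in> sets M \<and> S \<subseteq> G \<and> f S \<le> a" for S and n :: nat
    proof -
      obtain S' where "S' \<in> sets M" "S \<subseteq> S'" "S' \<subseteq> G" "f S' \<le> a"
          "sup_increment G a S \<le> 2 * (f S' - f S)"
        using exists_greedy_increment[of S G a] S by auto
      then show ?thesis
        by (intro exI[of _ S']) simp
    qed
  qed
  then show ?thesis
    by (auto intro: incseq_SucI)
qed

lemma intermediate_value:
  assumes G: "G \<in> sets M" "G \<subseteq> X" and a: "0 \<le> a" "a \<le> f G"
  shows "\<exists>F\<in>sets M. F \<subseteq> G \<and> f F = a"
proof -
  obtain S where inc: "incseq S" and S: "\<And>n. S n \<in> sets M \<and> S n \<subseteq> G \<and> f (S n) \<le> a"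
    and S_step: "\<And>n. sup_increment G a (S n) \<le> 2 * (f (S (Suc n)) - f (S n))"
    using exists_greedy_sequence[OF a(1), of G] by blast
  define L where "L = (\<Union>n. S n)"
  have L: "L \<in> sets M" "L \<subseteq> G"
    using S by (auto simp: L_def)
  have lim: "(\<lambda>n. f (S n)) \<longlonglongrightarrow> f L"
    unfolding L_def using S inc by (intro is_charge_incseq[OF charge]) auto
  then have "f L \<le> a"
    using S by (intro LIMSEQ_le_const2) auto
  moreover have "\<not> f L < a"
  proof
    assume "f L < a"
    moreover have "f (G - L) = f G - f L"
      using is_charge_Diff[OF charge G(1) L] .
    ultimately obtain H where H: "H \<in> sets M" "H \<subseteq> G - L" "0 < f H" "f H \<le> a - f L"
      using exists_small_subset[of "G - L" "a - f L"] G L a by auto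
    \<comment> \<open>H stays an admissible increment at every stage, but the greedy gains tend to 0\<close>
    have "f H \<le> 2 * (f (S (Suc n)) - f (S n))" for n
    proof -
      have "f (S n) \<le> f L"
        using S L G by (intro mono) (auto simp: L_def)
      then have "f H \<le> sup_increment G a (S n)"
        using H by (intro le_sup_increment) (auto simp: L_def)
      then show ?thesis
        using S_step by (meson order_trans)
    qed
    moreover have "(\<lambda>n. 2 * (f (S (Suc n)) - f (S n))) \<longlonglongrightarrow> 2 * (f L - f L)"
      by (intro tendsto_intros LIMSEQ_Suc lim)
    ultimately have "f H \<le> 2 * (f L - f L)"
      by (intro LIMSEQ_le_const) auto
    with H show False by simp
  qed
  ultimately have "f L = a"
    by simp
  with L show ?thesis
    by blast
qed

lemma exists_fine_partition:
  assumes G: "G \<in> sets M" "G \<subseteq> X" and "0 < d"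
  shows "\<exists>Q. partition_on G Q \<and> finite Q \<and> Q \<subseteq> sets M \<and> (\<forall>q\<in>Q. f q \<le> d)"
proof -
  have trivial: "\<exists>Q. partition_on G Q \<and> finite Q \<and> Q \<subseteq> sets M \<and> (\<forall>q\<in>Q. f q \<le> d)"
    if "G \<in> sets M" "f G \<le> d" for G
    using that by (intro exI[of _ "{G} - {{}}"]) (auto simp: partition_on_def disjoint_def)
  have "\<exists>Q. partition_on G Q \<and> finite Q \<and> Q \<subseteq> sets M \<and> (\<forall>q\<in>Q. f q \<le> d)"
    if "G \<in> sets M" "G \<subseteq> X" "f G \<le> real m * d" for m G
    using that
  proof (induction m arbitrary: G)
    case 0
    then show ?case using trivial \<open>0 < d\<close> by simp
  next
    case (Suc m)
    show ?case
    proof (cases "f G \<le> d")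
      case True
      with Suc.prems trivial show ?thesis by blast
    next
      case False
      then obtain F where F: "F \<in> sets M" "F \<subseteq> G" "f F = d"
        using intermediate_value[of G d] Suc.prems \<open>0 < d\<close> by auto
      have "f (G - F) = f G - d"
        using is_charge_Diff[OF charge Suc.prems(1) F(1,2)] F(3) by simp
      then obtain Q where Q: "partition_on (G - F) Q" "finite Q" "Q \<subseteq> sets M" "\<forall>q\<in>Q. f q \<le> d"
        using Suc.IH[of "G - F"] Suc.prems F by (auto simp: algebra_simps)
      have "F \<noteq> {}"
        using F \<open>0 < d\<close> is_charge_empty[OF charge] by auto
      with Q(1) F have "partition_on G (insert F Q)"
        by (subst partition_on_insert) (auto simp: disjnt_def dest: partition_onD1)
      with Q F show ?thesis
        by (intro exI[of _ "insert F Q"]) auto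
    qed
  qed
  moreover obtain m where "f G / d \<le> real m"
    using real_arch_simple by blast
  then have "f G \<le> real m * d"
    using \<open>0 < d\<close> by (simp add: divide_le_eq)
  ultimately show ?thesis
    using G by blast
qed

end

lemma pos_part_eq_self:
  assumes f: "is_charge M f" and nonneg: "\<And>A. A \<in> sets M \<Longrightarrow> A \<subseteq> X \<Longrightarrow> 0 \<le> f A"
    and B: "B \<in> sets M" "B \<subseteq> X"
  shows "pos_part M f B = f B"
  unfolding pos_part_def
proof (rule cSup_eq_maximum)
  show "f B \<in> {f C |C. C \<in> sets M \<and> C \<subseteq> B}"
    using B by blast
  show "x \<le> f B" if "x \<in> {f C |C. C \<in> sets M \<and> C \<subseteq> B}" for x
    using that B is_charge_mono_on[OF f nonneg] by auto
qed

lemma nonneg_nonatomic_chargeI: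
  assumes f: "nonatomic_charge M f" and nonneg: "\<And>A. A \<in> sets M \<Longrightarrow> A \<subseteq> X \<Longrightarrow> 0 \<le> f A"
  shows "nonneg_nonatomic_charge M X f"
proof
  show charge: "is_charge M f"
    using f by (simp add: nonatomic_charge_def)
  show "0 \<le> f A" if "A \<in> sets M" "A \<subseteq> X" for A
    using nonneg that .
  fix A assume A: "A \<in> sets M" "A \<subseteq> X" "0 < f A"
  have "\<not> is_atom M (pos_part M f) A"
    using f by (simp add: nonatomic_charge_def nonatomic_measure_def)
  then obtain B where B: "B \<in> sets M" "B \<subseteq> A" "f B \<noteq> 0" "f B \<noteq> f A"
    using A pos_part_eq_self[OF charge nonneg] by (auto simp: is_atom_def)
  moreover have "0 \<le> f B" "f B \<le> f A"
    using A B nonneg is_charge_mono_on[OF charge nonneg] by auto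
  ultimately show "\<exists>B\<in>sets M. B \<subseteq> A \<and> 0 < f B \<and> f B < f A"
    by (intro bexI[of _ B]) auto
qed

lemma homogeneous_system_nontrivial_solution:
  fixes v :: "'b \<Rightarrow> 'i \<Rightarrow> real"
  assumes "finite J" "finite F" "card J < card F"
  shows "\<exists>a. (\<exists>p\<in>F. a p \<noteq> 0) \<and> (\<forall>i\<in>J. (\<Sum>p\<in>F. a p * v p i) = 0)"
  using assms
proof (induction J arbitrary: F v rule: finite_induct)
  case empty
  then obtain p where "p \<in> F"
    by fastforce
  then show ?case
    by (intro exI[of _ "\<lambda>_. 1"]) auto
next
  case (insert j J)
  show ?case
  proof (cases "\<forall>p\<in>F. v p j = 0")
    case True
    moreover obtain a where "\<exists>p\<in>F. a p \<noteq> 0" "\<forall>i\<in>J. (\<Sum>p\<in>F. a p * v p i) = 0"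
      using insert.IH[of F v] insert.prems insert.hyps by auto
    ultimately show ?thesis
      by (intro exI[of _ a]) auto
  next
    case False
    then obtain p0 where p0: "p0 \<in> F" "v p0 j \<noteq> 0"
      by blast
    \<comment> \<open>Gaussian elimination: the pivot p0 clears the j-th equation\<close>
    define v' where "v' p i = v p i - v p j / v p0 j * v p0 i" for p i
    have "card J < card (F - {p0})"
      using insert.prems insert.hyps p0 by simp
    then obtain b where b: "\<exists>p\<in>F - {p0}. b p \<noteq> 0" "\<forall>i\<in>J. (\<Sum>p\<in>F - {p0}. b p * v' p i) = 0"
      using insert.IH[of "F - {p0}" v'] insert.prems by auto
    define a where "a = b(p0 := - (\<Sum>p\<in>F - {p0}. b p * v p j) / v p0 j)"
    have "(\<Sum>p\<in>F. a p * v p i) = (\<Sum>p\<in>F - {p0}. b p * v' p i)" for i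
    proof -
      have "(\<Sum>p\<in>F. a p * v p i) = a p0 * v p0 i + (\<Sum>p\<in>F - {p0}. b p * v p i)"
        using p0 insert.prems by (simp add: sum.remove a_def)
      also have "\<dots> = (\<Sum>p\<in>F - {p0}. b p * v' p i)"
        using p0 by (simp add: a_def v'_def algebra_simps sum_subtractf sum_distrib_left
            sum_divide_distrib[symmetric] sum_distrib_right[symmetric])
      finally show ?thesis .
    qed
    moreover have "(\<Sum>p\<in>F - {p0}. b p * v' p j) = 0"
      using p0 by (simp add: v'_def)
    moreover have "\<exists>p\<in>F. a p \<noteq> 0"
      using b(1) by (auto simp: a_def)
    ultimately show ?thesis
      using b(2) by (intro exI[of _ a]) auto
  qed
qed

definition fractional_coords :: "'b set \<Rightarrow> ('b \<Rightarrow> real) \<Rightarrow> 'b set" where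
  "fractional_coords F x = {p \<in> F. 0 < x p \<and> x p < 1}"

lemma sum_split_by_weight:
  fixes x g :: "'b \<Rightarrow> real"
  assumes "finite F" "\<forall>p\<in>F. 0 \<le> x p \<and> x p \<le> 1"
  shows "(\<Sum>p\<in>F. x p * g p) = (\<Sum>p\<in>{p \<in> F. x p = 1}. g p) + (\<Sum>p\<in>fractional_coords F x. x p * g p)"
proof -
  have "(\<Sum>p\<in>F. x p * g p) = (\<Sum>p\<in>{p \<in> F. x p = 1} \<union> fractional_coords F x. x p * g p)"
  proof (rule sum.mono_neutral_right)
    show "\<forall>p\<in>F - ({p \<in> F. x p = 1} \<union> fractional_coords F x). x p * g p = 0"
      using assms(2) by (force simp: fractional_coords_def)
  qed (use assms(1) in \<open>auto simp: fractional_coords_def\<close>)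
  also have "\<dots> = (\<Sum>p\<in>{p \<in> F. x p = 1}. x p * g p) + (\<Sum>p\<in>fractional_coords F x. x p * g p)"
    using assms(1) by (intro sum.union_disjoint) (auto simp: fractional_coords_def)
  finally show ?thesis
    by simp
qed

lemma sum_update_on_subset:
  fixes x a g :: "'b \<Rightarrow> real"
  assumes "finite F" "Z \<subseteq> F"
  shows "(\<Sum>p\<in>F. (if p \<in> Z then x p + s * a p else x p) * g p)
    = (\<Sum>p\<in>F. x p * g p) + s * (\<Sum>p\<in>Z. a p * g p)"
proof -
  have "(\<Sum>p\<in>F. (if p \<in> Z then x p + s * a p else x p) * g p)
      = (\<Sum>p\<in>F. x p * g p + (if p \<in> Z then s * (a p * g p) else 0))"
    by (rule sum.cong) (auto simp: algebra_simps)
  also have "\<dots> = (\<Sum>p\<in>F. x p * g p) + s * (\<Sum>p\<in>Z. a p * g p)"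
    using assms by (simp add: sum.distrib sum.inter_restrict[symmetric] Int_absorb1 sum_distrib_left)
  finally show ?thesis .
qed

lemma exists_step_to_boundary:
  fixes x a :: "'b \<Rightarrow> real"
  assumes "finite Z" "Z \<noteq> {}" and Z: "\<And>p. p \<in> Z \<Longrightarrow> 0 < x p \<and> x p < 1 \<and> a p \<noteq> 0"
  shows "\<exists>s>0. (\<forall>p\<in>Z. 0 \<le> x p + s * a p \<and> x p + s * a p \<le> 1) \<and> (\<exists>p\<in>Z. x p + s * a p \<in> {0, 1})"
proof -
  define bound where "bound p = (if 0 < a p then (1 - x p) / a p else - x p / a p)" for p
  have bound_pos: "0 < bound p" if "p \<in> Z" for p
    using Z[OF that] by (auto simp: bound_def divide_pos_neg)
  have stays_inside: "0 \<le> x p + s * a p \<and> x p + s * a p \<le> 1" if "p \<in> Z" "0 < s" "s \<le> bound p" for p s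
  proof (cases "0 < a p")
    case True
    then have "s * a p \<le> 1 - x p"
      using that by (simp add: bound_def pos_le_divide_eq)
    with True that Z[of p] show ?thesis
      by (simp add: add_nonneg_nonneg less_imp_le)
  next
    case False
    then have "a p < 0"
      using Z[OF that(1)] by simp
    have "- (x p / a p) * a p \<le> s * a p"
      using that(3) \<open>a p < 0\<close> False by (intro mult_right_mono_neg) (auto simp: bound_def)
    with \<open>a p < 0\<close> have "- x p \<le> s * a p"
      by simp
    moreover have "s * a p < 0"
      using \<open>a p < 0\<close> \<open>0 < s\<close> by (simp add: mult_pos_neg)
    ultimately show ?thesis
      using Z[OF that(1)] by simp
  qed
  define s where "s = Min (bound ` Z)"
  have "s \<in> bound ` Z"
    unfolding s_def using assms(1,2) by (intro Min_in) auto
  then obtain p0 where p0: "p0 \<in> Z" "s = bound p0"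
    by blast
  have "s \<le> bound p" if "p \<in> Z" for p
    using assms(1) that by (simp add: s_def)
  moreover have "0 < s"
    using p0 bound_pos by simp
  moreover have "x p0 + s * a p0 \<in> {0, 1}"
    using p0 Z[OF p0(1)] by (auto simp: bound_def)
  ultimately show ?thesis
    using stays_inside p0(1) by blast
qed

lemma reduce_fractional_coords:
  fixes v :: "'b \<Rightarrow> 'i \<Rightarrow> real"
  assumes "finite J" "finite F" and x: "\<forall>p\<in>F. 0 \<le> x p \<and> x p \<le> 1"
    and more: "card J < card (fractional_coords F x)"
  shows "\<exists>y. (\<forall>p\<in>F. 0 \<le> y p \<and> y p \<le> 1) \<and> (\<forall>i\<in>J. (\<Sum>p\<in>F. y p * v p i) = (\<Sum>p\<in>F. x p * v p i))
    \<and> card (fractional_coords F y) < card (fractional_coords F x)"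
proof -
  define Fr where "Fr = fractional_coords F x"
  have Fr: "finite Fr" "Fr \<subseteq> F"
    using assms(2) by (auto simp: Fr_def fractional_coords_def)
  obtain a where a: "\<exists>p\<in>Fr. a p \<noteq> 0" "\<forall>i\<in>J. (\<Sum>p\<in>Fr. a p * v p i) = 0"
    using homogeneous_system_nontrivial_solution[OF assms(1) Fr(1), where v = v] more by (auto simp: Fr_def)
  define Z where "Z = {p \<in> Fr. a p \<noteq> 0}"
  have Z: "finite Z" "Z \<noteq> {}" "Z \<subseteq> F"
    using Fr a(1) by (auto simp: Z_def)
  obtain s p0 where s: "\<forall>p\<in>Z. 0 \<le> x p + s * a p \<and> x p + s * a p \<le> 1"
      and p0: "p0 \<in> Z" "x p0 + s * a p0 \<in> {0, 1}"
    using exists_step_to_boundary[OF Z(1,2), of x a] by (auto simp: Z_def Fr_def fractional_coords_def)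
  define y where "y p = (if p \<in> Z then x p + s * a p else x p)" for p
  have bounds: "\<forall>p\<in>F. 0 \<le> y p \<and> y p \<le> 1"
    using x s by (simp add: y_def)
  have sums: "(\<Sum>p\<in>F. y p * v p i) = (\<Sum>p\<in>F. x p * v p i)" if "i \<in> J" for i
  proof -
    have "(\<Sum>p\<in>Z. a p * v p i) = (\<Sum>p\<in>Fr. a p * v p i)"
      using Fr by (intro sum.mono_neutral_left) (auto simp: Z_def)
    with a(2) that show ?thesis
      unfolding y_def using sum_update_on_subset[OF assms(2) Z(3), of x s a "\<lambda>p. v p i"] by simp
  qed
  have "fractional_coords F y \<subseteq> Fr - {p0}"
    using p0 by (auto simp: fractional_coords_def Fr_def Z_def y_def)
  then have "card (fractional_coords F y) \<le> card (Fr - {p0})"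
    using Fr(1) by (intro card_mono) auto
  also have "\<dots> < card Fr"
    using Fr(1) p0(1) by (intro card_Diff1_less) (auto simp: Z_def)
  finally show ?thesis
    using bounds sums by (auto simp: Fr_def)
qed

lemma exists_few_fractional_coords:
  fixes v :: "'b \<Rightarrow> 'i \<Rightarrow> real"
  assumes "finite J" "finite F" "\<forall>p\<in>F. 0 \<le> x p \<and> x p \<le> 1"
  shows "\<exists>y. (\<forall>p\<in>F. 0 \<le> y p \<and> y p \<le> 1) \<and> (\<forall>i\<in>J. (\<Sum>p\<in>F. y p * v p i) = (\<Sum>p\<in>F. x p * v p i))
    \<and> card (fractional_coords F y) \<le> card J"
  using assms(3)
proof (induction "card (fractional_coords F x)" arbitrary: x rule: less_induct)
  case less
  show ?case
  proof (cases "card (fractional_coords F x) \<le> card J")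
    case True
    with less.prems show ?thesis
      by blast
  next
    case False
    then obtain y where y: "\<forall>p\<in>F. 0 \<le> y p \<and> y p \<le> 1"
        "\<forall>i\<in>J. (\<Sum>p\<in>F. y p * v p i) = (\<Sum>p\<in>F. x p * v p i)"
        "card (fractional_coords F y) < card (fractional_coords F x)"
      using reduce_fractional_coords[OF assms(1,2) less.prems, of v] by auto
    with less.hyps[OF y(3) y(1)] show ?thesis
      by auto
  qed
qed

lemma disjoint_family_on_fun_upd_insert:
  assumes "a \<notin> K" "disjoint_family_on F K" "(\<Union>j\<in>K. F j) = E - S" "S \<subseteq> E"
  shows "disjoint_family_on (F(a := S)) (insert a K) \<and> (\<Union>j\<in>insert a K. (F(a := S)) j) = E"
proof -
  have "(F(a := S)) ` K = F ` K"
    using assms(1) by (intro image_cong) auto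
  with assms show ?thesis
    by (auto simp: disjoint_family_on_insert disjoint_family_on_def)
qed

lemma remainder_share:
  fixes x :: real
  assumes "0 < k"
  shows "(x - x / Suc k) / k = x / Suc k"
proof -
  have "x - x / Suc k = k * (x / Suc k)"
    by (simp add: field_simps)
  with assms show ?thesis
    by simp
qed

locale nonneg_nonatomic_family =
  fixes M :: "'a measure" and X :: "'a set" and P :: "'i set" and \<psi> :: "'i \<Rightarrow> 'a set \<Rightarrow> real"
  assumes finite_P: "finite P"
    and member: "\<And>i. i \<in> P \<Longrightarrow> nonneg_nonatomic_charge M X (\<psi> i)"
begin

lemma charge: "i \<in> P \<Longrightarrow> is_charge M (\<psi> i)"
  using member nonneg_nonatomic_charge.charge by blast

lemma nonneg: "i \<in> P \<Longrightarrow> A \<in> sets M \<Longrightarrow> A \<subseteq> X \<Longrightarrow> 0 \<le> \<psi> i A"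
  using member nonneg_nonatomic_charge.nonneg by blast

definition total :: "'a set \<Rightarrow> real" where
  "total A = (\<Sum>i\<in>P. \<psi> i A)"

lemma le_total: "i \<in> P \<Longrightarrow> A \<in> sets M \<Longrightarrow> A \<subseteq> X \<Longrightarrow> \<psi> i A \<le> total A"
  unfolding total_def using finite_P nonneg by (intro member_le_sum) auto

lemma total_nonneg_nonatomic: "nonneg_nonatomic_charge M X total"
proof
  show total_charge: "is_charge M total"
    unfolding total_def[abs_def] using finite_P charge by (intro is_charge_sum)
  show "0 \<le> total A" if "A \<in> sets M" "A \<subseteq> X" for A
    unfolding total_def using that nonneg by (intro sum_nonneg) auto
  fix A assume A: "A \<in> sets M" "A \<subseteq> X" "0 < total A"
  obtain i where i: "i \<in> P" "0 < \<psi> i A"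
    using A(3) sum_nonpos[of P "\<lambda>i. \<psi> i A"] unfolding total_def by (meson not_le)
  then obtain B where B: "B \<in> sets M" "B \<subseteq> A" "0 < \<psi> i B" "\<psi> i B < \<psi> i A"
    using nonneg_nonatomic_charge.nonatomic[OF member[OF i(1)] A(1,2)] by blast
  have "\<psi> i (A - B) \<le> total (A - B)"
    using A B i by (intro le_total) auto
  moreover have "\<psi> i (A - B) = \<psi> i A - \<psi> i B"
    using is_charge_Diff[OF charge[OF i(1)] A(1) B(1,2)] .
  moreover have "total (A - B) = total A - total B"
    using is_charge_Diff[OF total_charge A(1) B(1,2)] .
  moreover have "\<psi> i B \<le> total B"
    using A B i by (intro le_total) auto
  ultimately show "\<exists>B\<in>sets M. B \<subseteq> A \<and> 0 < total B \<and> total B < total A"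
    using B by (intro bexI[of _ B]) auto
qed

definition fractional_split :: "real \<Rightarrow> 'a set \<Rightarrow> 'a set \<Rightarrow> 'a set set \<Rightarrow> ('a set \<Rightarrow> real) \<Rightarrow> bool" where
  "fractional_split t E S Q w \<longleftrightarrow> S \<in> sets M \<and> S \<subseteq> E \<and> finite Q \<and> Q \<subseteq> sets M \<and> disjoint Q \<and>
     (\<forall>q\<in>Q. q \<subseteq> E - S \<and> 0 \<le> w q \<and> w q \<le> 1) \<and>
     (\<forall>i\<in>P. \<psi> i S + (\<Sum>q\<in>Q. w q * \<psi> i q) = t * \<psi> i E)"

lemma fractional_split_refine:
  assumes split: "fractional_split t E S Q w" and "E \<subseteq> X" "0 < d"
  shows "\<exists>Q' w'. fractional_split t E S Q' w' \<and> (\<forall>q\<in>Q'. total q \<le> d)"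
proof -
  have Q: "finite Q" "Q \<subseteq> sets M" "disjoint Q" "\<And>q. q \<in> Q \<Longrightarrow> q \<subseteq> E - S \<and> 0 \<le> w q \<and> w q \<le> 1"
    using split by (auto simp: fractional_split_def)
  have "\<forall>q\<in>Q. \<exists>R. partition_on q R \<and> finite R \<and> R \<subseteq> sets M \<and> (\<forall>r\<in>R. total r \<le> d)"
  proof
    fix q assume "q \<in> Q"
    then have "q \<in> sets M" "q \<subseteq> X"
      using Q assms(2) by auto
    then show "\<exists>R. partition_on q R \<and> finite R \<and> R \<subseteq> sets M \<and> (\<forall>r\<in>R. total r \<le> d)"
      using nonneg_nonatomic_charge.exists_fine_partition[OF total_nonneg_nonatomic _ _ \<open>0 < d\<close>]
      by blast
  qed
  then obtain pieces where pieces: "\<And>q. q \<in> Q \<Longrightarrow> partition_on q (pieces q) \<and> finite (pieces q) \<and>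
      pieces q \<subseteq> sets M \<and> (\<forall>r\<in>pieces q. total r \<le> d)"
    by metis
  define Q' where "Q' = (\<Union>q\<in>Q. pieces q)"
  define w' where "w' r = w (THE q. q \<in> Q \<and> r \<in> pieces q)" for r
  have w': "w' r = w q" if "q \<in> Q" "r \<in> pieces q" for q r
    unfolding w'_def using that pieces partition_on_disjoint_unique[OF Q(3)]
    by (intro arg_cong[of _ _ w] the_equality) blast+
  have "(\<Sum>r\<in>Q'. w' r * \<psi> i r) = (\<Sum>q\<in>Q. w q * \<psi> i q)" if "i \<in> P" for i
    unfolding Q'_def using Q(1,3) pieces w' by (intro is_charge_weighted_refinement[OF charge[OF that]]) auto
  moreover have "disjoint Q'"
    unfolding Q'_def using Q(3) pieces by (intro disjoint_UN_partition_on) auto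
  moreover have "r \<subseteq> E - S \<and> 0 \<le> w' r \<and> w' r \<le> 1" if "r \<in> Q'" for r
    using that pieces Q(4) w' by (fastforce simp: Q'_def partition_on_def)
  moreover have "finite Q'"
    using Q(1) pieces by (simp add: Q'_def)
  moreover have "Q' \<subseteq> sets M" "\<forall>r\<in>Q'. total r \<le> d"
    using pieces unfolding Q'_def by blast+
  ultimately show ?thesis
    using split unfolding fractional_split_def by (intro exI[of _ Q'] exI[of _ w']) auto
qed

lemma fractional_split_absorb_ones:
  assumes split: "fractional_split t E S Q y"
  shows "fractional_split t E (S \<union> \<Union>{q \<in> Q. y q = 1}) (fractional_coords Q y) y"
proof -
  have Q: "finite Q" "Q \<subseteq> sets M" "disjoint Q" "\<And>q. q \<in> Q \<Longrightarrow> q \<subseteq> E - S \<and> 0 \<le> y q \<and> y q \<le> 1"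
    and S: "S \<in> sets M" "S \<subseteq> E"
    and eq: "\<And>i. i \<in> P \<Longrightarrow> \<psi> i S + (\<Sum>q\<in>Q. y q * \<psi> i q) = t * \<psi> i E"
    using split by (auto simp: fractional_split_def)
  define U where "U = {q \<in> Q. y q = 1}"
  define Q' where "Q' = fractional_coords Q y"
  have U: "U \<subseteq> Q" "finite U" "U \<subseteq> sets M" "disjoint U" "\<Union>U \<in> sets M" "S \<inter> \<Union>U = {}"
    using Q by (auto simp: U_def pairwise_subset intro!: sets.finite_Union)
  have Q': "Q' \<subseteq> Q" "U \<inter> Q' = {}"
    by (auto simp: Q'_def U_def fractional_coords_def)
  have "q \<subseteq> E - (S \<union> \<Union>U)" if "q \<in> Q'" for q
  proof -
    have "q \<inter> u = {}" if "u \<in> U" for u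
    proof (rule disjointD[OF Q(3)])
      show "q \<in> Q" "u \<in> Q" "q \<noteq> u"
        using \<open>q \<in> Q'\<close> that Q' U(1) by auto
    qed
    then show ?thesis
      using Q(4) Q'(1) that by auto
  qed
  moreover have "\<psi> i (S \<union> \<Union>U) + (\<Sum>q\<in>Q'. y q * \<psi> i q) = t * \<psi> i E" if i: "i \<in> P" for i
  proof -
    have "\<psi> i (S \<union> \<Union>U) = \<psi> i S + (\<Sum>u\<in>U. \<psi> i u)"
      using is_charge_Un[OF charge[OF i] S(1) U(5,6)] is_charge_Union[OF charge[OF i] U(2,3,4)] by simp
    with eq[OF i] show ?thesis
      using sum_split_by_weight[of Q y "\<psi> i"] Q(1,4) by (simp add: U_def Q'_def)
  qed
  moreover have "S \<union> \<Union>U \<in> sets M" "S \<union> \<Union>U \<subseteq> E"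
    using S U(1,5) Q(4) by auto
  moreover have "finite Q'" "Q' \<subseteq> sets M" "disjoint Q'"
    using Q Q'(1) by (auto intro: finite_subset pairwise_subset)
  ultimately show ?thesis
    using Q'(1) Q(4) by (auto simp: fractional_split_def U_def Q'_def)
qed

lemma fractional_split_reduce:
  assumes split: "fractional_split t E S Q w"
  shows "\<exists>S' Q' w'. fractional_split t E S' Q' w' \<and> S \<subseteq> S' \<and> Q' \<subseteq> Q \<and> card Q' \<le> card P"
proof -
  obtain y where y: "\<forall>q\<in>Q. 0 \<le> y q \<and> y q \<le> 1"
      "\<forall>i\<in>P. (\<Sum>q\<in>Q. y q * \<psi> i q) = (\<Sum>q\<in>Q. w q * \<psi> i q)"
      "card (fractional_coords Q y) \<le> card P"
    using exists_few_fractional_coords[OF finite_P, of Q w "\<lambda>q i. \<psi> i q"] split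
    by (auto simp: fractional_split_def)
  with split have "fractional_split t E S Q y"
    by (simp add: fractional_split_def)
  with y(3) show ?thesis
    using fractional_split_absorb_ones by (fastforce simp: fractional_coords_def)
qed

lemma exists_fine_fractional_split:
  assumes "fractional_split t E S Q w" "E \<subseteq> X" "0 < d"
  shows "\<exists>S' Q' w'. fractional_split t E S' Q' w' \<and> S \<subseteq> S' \<and> card Q' \<le> card P \<and>
    (\<forall>q\<in>Q'. total q \<le> d)"
proof -
  obtain Q1 w1 where "fractional_split t E S Q1 w1" "\<forall>q\<in>Q1. total q \<le> d"
    using fractional_split_refine[OF assms] by blast
  moreover obtain S' Q' w' where "fractional_split t E S' Q' w'" "S \<subseteq> S'" "Q' \<subseteq> Q1" "card Q' \<le> card P"
    using fractional_split_reduce[OF \<open>fractional_split t E S Q1 w1\<close>] by blast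
  ultimately show ?thesis
    by blast
qed

lemma fractional_split_error:
  fixes d :: real
  assumes split: "fractional_split t E S Q w" and "E \<subseteq> X" "i \<in> P" "\<forall>q\<in>Q. total q \<le> d"
  shows "\<bar>\<psi> i S - t * \<psi> i E\<bar> \<le> real (card Q) * d"
proof -
  have Q: "Q \<subseteq> sets M" "\<And>q. q \<in> Q \<Longrightarrow> q \<subseteq> E \<and> 0 \<le> w q \<and> w q \<le> 1"
    and eq: "\<psi> i S + (\<Sum>q\<in>Q. w q * \<psi> i q) = t * \<psi> i E"
    using split \<open>i \<in> P\<close> by (auto simp: fractional_split_def)
  have "\<bar>w q * \<psi> i q\<bar> \<le> d" if "q \<in> Q" for q
  proof -
    have "0 \<le> \<psi> i q" "\<psi> i q \<le> total q"
      using Q that assms(2,3) by (auto intro!: nonneg le_total)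
    moreover have "w q * \<psi> i q \<le> \<psi> i q"
      using Q(2)[OF that] \<open>0 \<le> \<psi> i q\<close> by (simp add: mult_left_le_one_le)
    ultimately show ?thesis
      using Q(2)[OF that] assms(4)[rule_format, OF that] by (simp add: abs_mult)
  qed
  then have "(\<Sum>q\<in>Q. \<bar>w q * \<psi> i q\<bar>) \<le> real (card Q) * d"
    by (rule sum_bounded_above)
  moreover have "\<bar>\<psi> i S - t * \<psi> i E\<bar> = \<bar>\<Sum>q\<in>Q. w q * \<psi> i q\<bar>"
    using eq by linarith
  ultimately show ?thesis
    using sum_abs[of "\<lambda>q. w q * \<psi> i q" Q] by linarith
qed

lemma exists_fractional_split_sequence:
  assumes E: "E \<in> sets M" "E \<subseteq> X" and t: "0 \<le> t" "t \<le> 1"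
  shows "\<exists>S. incseq S \<and> (\<forall>n. \<exists>Q w. fractional_split t E (S n) Q w \<and> card Q \<le> card P \<and>
    (\<forall>q\<in>Q. total q \<le> 1 / Suc n))"
proof -
  define good where "good n S \<longleftrightarrow> (\<exists>Q w. fractional_split t E S Q w \<and> card Q \<le> card P \<and>
      (\<forall>q\<in>Q. total q \<le> 1 / Suc n))" for n S
  have "\<exists>S. \<forall>n. good n (S n) \<and> S n \<subseteq> S (Suc n)"
  proof (rule dependent_nat_choice)
    have "fractional_split t E {} {E} (\<lambda>_. t)"
      using E t by (simp add: fractional_split_def is_charge_empty[OF charge])
    then obtain S' Q' w' where "fractional_split t E S' Q' w'" "card Q' \<le> card P"
        "\<forall>q\<in>Q'. total q \<le> 1 / Suc 0"
      using exists_fine_fractional_split[OF _ E(2), of t "{}" "{E}" "\<lambda>_. t" "1 / Suc 0"] by auto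
    then show "\<exists>S. good 0 S"
      unfolding good_def by blast
    show "\<exists>S'. good (Suc n) S' \<and> S \<subseteq> S'" if S: "good n S" for S n
    proof -
      obtain Q w where "fractional_split t E S Q w"
        using S by (auto simp: good_def)
      then obtain S' Q' w' where "fractional_split t E S' Q' w'" "S \<subseteq> S'" "card Q' \<le> card P"
          "\<forall>q\<in>Q'. total q \<le> 1 / Suc (Suc n)"
        using exists_fine_fractional_split[OF _ E(2), of t S Q w "1 / Suc (Suc n)"] by auto
      then show ?thesis
        unfolding good_def by blast
    qed
  qed
  then show ?thesis
    unfolding good_def by (auto intro: incseq_SucI)
qed

lemma exists_fraction:
  assumes E: "E \<in> sets M" "E \<subseteq> X" and t: "0 \<le> t" "t \<le> 1"
  shows "\<exists>S\<in>sets M. S \<subseteq> E \<and> (\<forall>i\<in>P. \<psi> i S = t * \<psi> i E)"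
proof -
  obtain S where inc: "incseq S" and good: "\<And>n. \<exists>Q w. fractional_split t E (S n) Q w \<and>
      card Q \<le> card P \<and> (\<forall>q\<in>Q. total q \<le> 1 / Suc n)"
    using exists_fractional_split_sequence[OF assms] by blast
  have S: "S n \<in> sets M" "S n \<subseteq> E" for n
    using good[of n] by (auto simp: fractional_split_def)
  have "\<psi> i (\<Union>n. S n) = t * \<psi> i E" if i: "i \<in> P" for i
  proof (rule LIMSEQ_unique)
    show "(\<lambda>n. \<psi> i (S n)) \<longlonglongrightarrow> \<psi> i (\<Union>n. S n)"
      using S inc by (intro is_charge_incseq[OF charge[OF i]]) auto
    have "\<bar>\<psi> i (S n) - t * \<psi> i E\<bar> \<le> real (card P) / Suc n" for n
    proof -
      obtain Q w where "fractional_split t E (S n) Q w" "card Q \<le> card P" "\<forall>q\<in>Q. total q \<le> 1 / Suc n"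
        using good[of n] by blast
      then have "\<bar>\<psi> i (S n) - t * \<psi> i E\<bar> \<le> real (card Q) * (1 / Suc n)"
        using fractional_split_error E(2) i by blast
      also have "\<dots> \<le> real (card P) / Suc n"
        using \<open>card Q \<le> card P\<close> by (simp add: divide_right_mono)
      finally show ?thesis .
    qed
    then have "(\<lambda>n. \<psi> i (S n) - t * \<psi> i E) \<longlonglongrightarrow> 0"
      by (intro Lim_null_comparison[OF always_eventually LIMSEQ_Suc[OF lim_const_over_n[of "real (card P)"]]])
        simp
    then show "(\<lambda>n. \<psi> i (S n)) \<longlonglongrightarrow> t * \<psi> i E"
      by (simp add: LIM_zero_iff)
  qed
  moreover have "(\<Union>n. S n) \<in> sets M" "(\<Union>n. S n) \<subseteq> E"
    using S by auto
  ultimately show ?thesis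
    by blast
qed

lemma exists_equal_partition:
  assumes "finite K" "K \<noteq> {}" "E \<in> sets M" "E \<subseteq> X"
  shows "\<exists>F. (\<forall>j\<in>K. F j \<in> sets M) \<and> disjoint_family_on F K \<and> (\<Union>j\<in>K. F j) = E \<and>
    (\<forall>i\<in>P. \<forall>j\<in>K. \<psi> i (F j) = \<psi> i E / card K)"
  using assms
proof (induction K arbitrary: E rule: finite_ne_induct)
  case (singleton a)
  then show ?case
    by (intro exI[of _ "\<lambda>_. E"]) (auto simp: disjoint_family_on_def)
next
  case (insert a K)
  define n where "n = card (insert a K)"
  have n: "n = Suc (card K)" "card K > 0"
    using insert.hyps by (auto simp: n_def card_gt_0_iff)
  obtain S where S: "S \<in> sets M" "S \<subseteq> E" "\<forall>i\<in>P. \<psi> i S = 1 / n * \<psi> i E"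
    using exists_fraction[of E "1 / n"] insert.prems n by auto
  obtain F where F: "\<forall>j\<in>K. F j \<in> sets M" "disjoint_family_on F K" "(\<Union>j\<in>K. F j) = E - S"
      "\<forall>i\<in>P. \<forall>j\<in>K. \<psi> i (F j) = \<psi> i (E - S) / card K"
    using insert.IH[of "E - S"] insert.prems S by blast
  define F' where "F' = F(a := S)"
  have F'_K: "\<And>j. j \<in> K \<Longrightarrow> F' j = F j" and F'_a: "F' a = S"
    using insert.hyps by (auto simp: F'_def)
  have partition: "disjoint_family_on F' (insert a K)" "(\<Union>j\<in>insert a K. F' j) = E"
    unfolding F'_def using disjoint_family_on_fun_upd_insert[OF \<open>a \<notin> K\<close> F(2,3) S(2)] by auto
  have part_value: "\<psi> i (F' j) = \<psi> i E / n" if i: "i \<in> P" and j: "j \<in> insert a K" for i j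
  proof (cases "j = a")
    case True
    then show ?thesis
      using S(3) i by (simp add: F'_a)
  next
    case False
    with j F'_K have "\<psi> i (F' j) = (\<psi> i E - \<psi> i E / n) / card K"
      using F(4) i is_charge_Diff[OF charge[OF i] insert.prems(1) S(1,2)] S(3) by simp
    also have "\<dots> = \<psi> i E / n"
      using n remainder_share by simp
    finally show ?thesis .
  qed
  have "\<forall>j\<in>insert a K. F' j \<in> sets M"
    using F(1) F'_K F'_a S(1) by auto
  with partition part_value show ?case
    unfolding n_def by (intro exI[of _ F']) simp
qed

end

lemma strong_solution_extend_by_empty:
  fixes \<psi> :: "'i \<Rightarrow> 'a set \<Rightarrow> real"
  assumes "P \<subseteq> I" and F: "\<forall>j\<in>P. F j \<in> sets M" "disjoint_family_on F P" "(\<Union>j\<in>P. F j) = X"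
    and equal: "\<And>i j. i \<in> P \<Longrightarrow> j \<in> P \<Longrightarrow> \<psi> i (F j) = \<psi> i (F i)"
    and nonneg: "\<And>i. i \<in> P \<Longrightarrow> 0 \<le> \<psi> i (F i)"
    and nonpos: "\<And>i A. i \<in> I - P \<Longrightarrow> A \<in> sets M \<Longrightarrow> A \<subseteq> X \<Longrightarrow> \<psi> i A \<le> 0"
    and empty: "\<And>i. i \<in> I \<Longrightarrow> \<psi> i {} = 0"
  shows "\<exists>G. (\<forall>i\<in>I. G i \<in> sets M) \<and> disjoint_family_on G I \<and> (\<Union>i\<in>I. G i) = X \<and>
    (\<forall>i\<in>I. \<forall>j\<in>I. \<psi> i (G j) \<le> \<psi> i (G i))"
proof -
  define G where "G j = (if j \<in> P then F j else {})" for j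
  have G: "G j \<in> sets M" "G j \<subseteq> X" for j
    using F by (auto simp: G_def)
  have "\<psi> i (G j) \<le> \<psi> i (G i)" if "i \<in> I" for i j
  proof (cases "i \<in> P")
    case True
    have "\<psi> i (G j) = \<psi> i (F i) \<or> \<psi> i (G j) = 0"
      using equal[OF True, of j] empty[OF that] by (simp add: G_def)
    with True nonneg[OF True] show ?thesis
      by (auto simp: G_def)
  next
    case False
    then show ?thesis
      using nonpos[of i "G j"] G empty[OF that] that by (simp add: G_def)
  qed
  moreover have "(\<Union>i\<in>I. G i) = X" "disjoint_family_on G I"
    using F \<open>P \<subseteq> I\<close> by (auto simp: G_def disjoint_family_on_def)
  ultimately show ?thesis
    using G by blast
qed

theorem lemma7:
  fixes M :: "'a measure" and r :: nat and \<psi> :: "nat \<Rightarrow> 'a set \<Rightarrow> real" and X :: "'a set"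
  assumes "r \<ge> 1"
    and "\<And>i. i < r \<Longrightarrow> nonatomic_charge M (\<psi> i)"
    and "X \<in> sets M"
    and "\<And>i. i < r \<Longrightarrow> (\<forall>A \<in> sets M. A \<subseteq> X \<longrightarrow> \<psi> i A \<ge> 0) \<or>
                         (\<forall>A \<in> sets M. A \<subseteq> X \<longrightarrow> \<psi> i A \<le> 0)"
    and "{i. i < r \<and> (\<forall>A \<in> sets M. A \<subseteq> X \<longrightarrow> \<psi> i A \<ge> 0)} \<noteq> {}"
  shows "\<exists>F :: nat \<Rightarrow> 'a set.
           (\<forall>i < r. F i \<in> sets M) \<and>
           (\<forall>i < r. \<forall>j < r. i \<noteq> j \<longrightarrow> F i \<inter> F j = {}) \<and>
           (\<Union>i<r. F i) = X \<and>
           (\<forall>i < r. \<forall>j < r. \<psi> i (F i) \<ge> \<psi> i (F j))"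
proof -
  define P where "P = {i. i < r \<and> (\<forall>A \<in> sets M. A \<subseteq> X \<longrightarrow> \<psi> i A \<ge> 0)}"
  have P: "P \<subseteq> {..<r}" "P \<noteq> {}" "finite P"
    using assms(5) finite_subset[of P "{..<r}"] by (auto simp: P_def)
  have "nonneg_nonatomic_family M X P \<psi>"
    using P(3) assms(2)
    by (auto simp: nonneg_nonatomic_family_def P_def intro!: nonneg_nonatomic_chargeI)
  then interpret nonneg_nonatomic_family M X P \<psi> .
  obtain F where F: "\<forall>j\<in>P. F j \<in> sets M" "disjoint_family_on F P" "(\<Union>j\<in>P. F j) = X"
      "\<forall>i\<in>P. \<forall>j\<in>P. \<psi> i (F j) = \<psi> i X / card P"
    using exists_equal_partition[OF P(3,2) assms(3) subset_refl] by blast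
  have "\<exists>G. (\<forall>i\<in>{..<r}. G i \<in> sets M) \<and> disjoint_family_on G {..<r} \<and> (\<Union>i\<in>{..<r}. G i) = X \<and>
      (\<forall>i\<in>{..<r}. \<forall>j\<in>{..<r}. \<psi> i (G j) \<le> \<psi> i (G i))"
  proof (rule strong_solution_extend_by_empty[OF P(1) F(1-3)])
    show "\<psi> i (F j) = \<psi> i (F i)" "0 \<le> \<psi> i (F i)" if "i \<in> P" "j \<in> P" for i j
      using F(4) that nonneg[OF that(1) assms(3) subset_refl] by simp_all
    show "\<psi> i A \<le> 0" if "i \<in> {..<r} - P" "A \<in> sets M" "A \<subseteq> X" for i A
      using assms(4)[of i] that by (auto simp: P_def)
    show "\<psi> i {} = 0" if "i \<in> {..<r}" for i
      using assms(2)[of i] that is_charge_empty by (auto simp: nonatomic_charge_def)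
  qed
  then show ?thesis
    by (simp only: disjoint_family_on_def Ball_def lessThan_iff)
qed

end
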